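(* Let $\eta,\omega\in\mathbb{R}$ with $\omega\neq0$, and for $s,c\in\mathbb{R}$ let $g_{s,c}(a,b)=e^{-(1+c)a}\big[1+e^{-2a}b^2+(\eta+\omega e^{-a})^2\big]^{-s/2}$ on $\mathbb{R}^2$. Then (1) $g_{s,c}\in L^1(\mathbb{R}^2,da\,db)$ if and only if $c>0$ and $s>1+c$; (2) there is a constant $M_{s,c}>0$ such that $|(Xg_{s,c})(a,b)|\le M_{s,c}\,g_{s,c}(a,b)$ for all $(a,b)\in\mathbb{R}^2$, for each of $X=\partial_a$, $X=\partial_b$ and $X=\partial_a\partial_b$. *)

theory Defs
  imports "HOL-Analysis.Analysis"
begin

definition gfun :: "real \<Rightarrow> real \<Rightarrow> real \<Rightarrow> real \<Rightarrow> real \<Rightarrow> real \<Rightarrow> real" where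
  "gfun \<eta> \<omega> s c a b =
     exp (- (1 + c) * a) * (1 + exp (- 2 * a) * b\<^sup>2 + (\<eta> + \<omega> * exp (- a))\<^sup>2) powr (- s / 2)"

end

theory Submission
  imports Defs
begin

text \<open>Substituting \<open>b = exp a * sqrt (1 + (\<eta> + \<omega> * exp (- a))\<^sup>2) * t\<close> factors the integral of
  \<open>g\<close> into \<open>\<integral> (1 + t\<^sup>2) powr (- s / 2) dt\<close>, finite iff \<open>s > 1\<close>, times
  \<open>\<integral> exp (- c * a) * (1 + (\<eta> + \<omega> * exp (- a))\<^sup>2) powr ((1 - s) / 2) da\<close>.
  As \<open>\<omega> \<noteq> 0\<close>, the bracket in the last integrand is comparable to \<open>max 1 (exp (- 2 * a))\<close>, so
  this integral converges iff \<open>exp (- c * a)\<close> decays at \<open>+\<infinity>\<close> and \<open>exp ((s - 1 - c) * a)\<close> at \<open>-\<infinity>\<close>.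
  Each of the derivatives is \<open>g\<close> times a rational function of \<open>exp (- a)\<close> and \<open>b\<close> whose numerator
  is dominated by the quadratic form \<open>1 + exp (- 2 * a) * b\<^sup>2 + (\<eta> + \<omega> * exp (- a))\<^sup>2\<close> in its
  denominator; dominating \<open>b * exp (- 2 * a)\<close> this way again needs \<open>\<omega> \<noteq> 0\<close>.\<close>

section \<open>Integrals on the real line\<close>

lemma nn_integral_exp_halfline_less_top_iff:
  fixes d :: real and S :: "real set"
  assumes "{0<..} \<subseteq> S" "S \<subseteq> {0..}"
  shows "(\<integral>\<^sup>+a. ennreal (exp (- d * a)) * indicator S a \<partial>lborel) < \<infinity> \<longleftrightarrow> d > 0"
proof
  assume "(\<integral>\<^sup>+a. ennreal (exp (- d * a)) * indicator S a \<partial>lborel) < \<infinity>"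
  then obtain r where r: "(\<integral>\<^sup>+a. ennreal (exp (- d * a)) * indicator S a \<partial>lborel) = ennreal r" "r \<ge> 0"
    by (auto simp: less_top_ennreal)
  show "d > 0"
  proof (rule ccontr)
    assume "\<not> d > 0"
    have "ennreal (r + 1) = emeasure lborel {0<..<r + 1}"
      using r(2) by simp
    also have "\<dots> = (\<integral>\<^sup>+a. indicator {0<..<r + 1} a \<partial>lborel)"
      by simp
    also have "\<dots> \<le> (\<integral>\<^sup>+a. ennreal (exp (- d * a)) * indicator S a \<partial>lborel)"
    proof (rule nn_integral_mono)
      fix a :: real
      show "indicator {0<..<r + 1} a \<le> ennreal (exp (- d * a)) * indicator S a"
        using \<open>\<not> d > 0\<close> assms by (auto simp: indicator_def mult_nonpos_nonneg)
    qed
    finally show False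
      using r by (simp add: ennreal_le_iff)
  qed
next
  assume d: "d > 0"
  have "(\<integral>\<^sup>+a. ennreal (exp (- d * a)) * indicator S a \<partial>lborel)
      \<le> (\<integral>\<^sup>+a. ennreal (exp (- d * a)) * indicator {0..} a \<partial>lborel)"
    using assms by (intro nn_integral_mono) (auto simp: indicator_def)
  also have "\<dots> = ennreal (exp (- d * 0) / d)"
    by (rule nn_integral_has_integral_lebesgue')
      (use has_integral_exp_minus_to_infinity[OF d, of 0] in auto)
  finally show "(\<integral>\<^sup>+a. ennreal (exp (- d * a)) * indicator S a \<partial>lborel) < \<infinity>"
    by (rule order.strict_trans1) simp
qed

lemma nn_integral_exp_two_sided_less_top_iff:
  fixes c e :: real
  shows "(\<integral>\<^sup>+a. ennreal (exp (- c * a + e * min a 0)) \<partial>lborel) < \<infinity> \<longleftrightarrow> c > 0 \<and> e > c"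
proof -
  have "(\<integral>\<^sup>+a. ennreal (exp (- c * a + e * min a 0)) \<partial>lborel)
      = (\<integral>\<^sup>+a. ennreal (exp (- c * a)) * indicator {0..} a
              + ennreal (exp ((e - c) * a)) * indicator {..<0} a \<partial>lborel)"
    by (rule nn_integral_cong) (auto simp: indicator_def algebra_simps min_def)
  also have "\<dots> = (\<integral>\<^sup>+a. ennreal (exp (- c * a)) * indicator {0..} a \<partial>lborel)
      + (\<integral>\<^sup>+a. ennreal (exp ((e - c) * a)) * indicator {..<0} a \<partial>lborel)"
    by (rule nn_integral_add) auto
  also have "(\<integral>\<^sup>+a. ennreal (exp ((e - c) * a)) * indicator {..<0} a \<partial>lborel)
      = (\<integral>\<^sup>+a. ennreal (exp (- (e - c) * a)) * indicator {0<..} a \<partial>lborel)"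
    using nn_integral_real_affine[where c = "-1" and t = 0
        and f = "\<lambda>a. ennreal (exp ((e - c) * a)) * indicator {..<0} a"]
    by (simp add: indicator_def algebra_simps)
  finally have split: "(\<integral>\<^sup>+a. ennreal (exp (- c * a + e * min a 0)) \<partial>lborel)
      = (\<integral>\<^sup>+a. ennreal (exp (- c * a)) * indicator {0..} a \<partial>lborel)
      + (\<integral>\<^sup>+a. ennreal (exp (- (e - c) * a)) * indicator {0<..} a \<partial>lborel)" .
  have "(\<integral>\<^sup>+a. ennreal (exp (- c * a)) * indicator {0..} a \<partial>lborel) < \<infinity> \<longleftrightarrow> c > 0"
    by (rule nn_integral_exp_halfline_less_top_iff) auto
  moreover have "(\<integral>\<^sup>+a. ennreal (exp (- (e - c) * a)) * indicator {0<..} a \<partial>lborel) < \<infinity> \<longleftrightarrow> e - c > 0"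
    by (rule nn_integral_exp_halfline_less_top_iff) auto
  ultimately show ?thesis
    unfolding split by auto
qed

lemma nn_integral_less_top_iff_comparable:
  fixes f h :: "'a \<Rightarrow> real"
  assumes [measurable]: "f \<in> borel_measurable M" "h \<in> borel_measurable M"
    and "k > 0" "K > 0" "\<And>x. h x \<ge> 0" "\<And>x. k * h x \<le> f x" "\<And>x. f x \<le> K * h x"
  shows "(\<integral>\<^sup>+x. f x \<partial>M) < \<infinity> \<longleftrightarrow> (\<integral>\<^sup>+x. h x \<partial>M) < \<infinity>"
proof
  have "ennreal k * (\<integral>\<^sup>+x. h x \<partial>M) = (\<integral>\<^sup>+x. k * h x \<partial>M)"
    using assms by (simp add: nn_integral_cmult ennreal_mult)
  also have "\<dots> \<le> (\<integral>\<^sup>+x. f x \<partial>M)"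
    using assms by (intro nn_integral_mono ennreal_leI) auto
  also assume "\<dots> < \<infinity>"
  finally show "(\<integral>\<^sup>+x. h x \<partial>M) < \<infinity>"
    using \<open>k > 0\<close> by (auto simp: ennreal_mult_less_top top.not_eq_extremum)
next
  have "(\<integral>\<^sup>+x. f x \<partial>M) \<le> (\<integral>\<^sup>+x. K * h x \<partial>M)"
    using assms by (intro nn_integral_mono ennreal_leI) auto
  also have "\<dots> = ennreal K * (\<integral>\<^sup>+x. h x \<partial>M)"
    using assms by (simp add: nn_integral_cmult ennreal_mult)
  also assume "(\<integral>\<^sup>+x. h x \<partial>M) < \<infinity>"
  then have "ennreal K * (\<integral>\<^sup>+x. h x \<partial>M) < \<infinity>"
    by (simp add: ennreal_mult_less_top)
  finally show "(\<integral>\<^sup>+x. f x \<partial>M) < \<infinity>" .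
qed

definition bracket_integral :: "real \<Rightarrow> ennreal" where
  "bracket_integral s = (\<integral>\<^sup>+t. ennreal ((1 + t\<^sup>2) powr (- s / 2)) \<partial>lborel)"

lemma nn_integral_powr_tail_less_top:
  fixes s :: real
  assumes "s > 1"
  shows "(\<integral>\<^sup>+t. ennreal (t powr (- s)) * indicator {1..} t \<partial>lborel) < \<infinity>"
proof -
  have "(\<integral>\<^sup>+t. ennreal (t powr (- s)) * indicator {1..} t \<partial>lborel)
      = ennreal (- (1 powr (- s + 1)) / (- s + 1))"
    by (rule nn_integral_has_integral_lebesgue')
      (use has_integral_powr_to_inf[of "- s" 1] assms in auto)
  then show ?thesis
    by simp
qed

lemma one_plus_square_powr_le:
  fixes s t :: real
  assumes "s \<ge> 0"
  shows "ennreal ((1 + t\<^sup>2) powr (- s / 2)) \<le> indicator {-1..1} t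
           + (ennreal (t powr (- s)) * indicator {1..} t + ennreal ((- t) powr (- s)) * indicator {1..} (- t))"
proof (cases "\<bar>t\<bar> \<le> 1")
  case True
  have "(1 + t\<^sup>2) powr (- s / 2) \<le> 1 powr (- s / 2)"
    using assms by (intro powr_mono2') auto
  then have "ennreal ((1 + t\<^sup>2) powr (- s / 2)) \<le> indicator {-1..1} t"
    using True by (auto simp: indicator_def ennreal_leI)
  then show ?thesis
    by (rule order_trans) (simp add: add_increasing2)
next
  case False
  have "(1 + t\<^sup>2) powr (- s / 2) \<le> (t\<^sup>2) powr (- s / 2)"
    using assms False by (intro powr_mono2') auto
  also have "\<dots> = (\<bar>t\<bar> powr 2) powr (- s / 2)"
    using False by (simp add: powr_numeral)
  also have "\<dots> = \<bar>t\<bar> powr (- s)"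
    by (subst powr_powr) simp
  finally show ?thesis
    using False by (cases "t \<ge> 0") (auto simp: indicator_def)
qed

lemma bracket_integral_less_top:
  assumes "s > 1"
  shows "bracket_integral s < \<infinity>"
proof -
  let ?tail = "\<integral>\<^sup>+t. ennreal (t powr (- s)) * indicator {1..} t \<partial>lborel"
  have "bracket_integral s \<le> (\<integral>\<^sup>+t. indicator {-1..1} t
          + (ennreal (t powr (- s)) * indicator {1..} t + ennreal ((- t) powr (- s)) * indicator {1..} (- t)) \<partial>lborel)"
    unfolding bracket_integral_def
    using assms by (intro nn_integral_mono one_plus_square_powr_le) simp
  also have "\<dots> = emeasure lborel {-1..1::real} + (?tail
      + (\<integral>\<^sup>+t. ennreal ((- t) powr (- s)) * indicator {1..} (- t) \<partial>lborel))"
    by (simp add: nn_integral_add)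
  also have "(\<integral>\<^sup>+t. ennreal ((- t) powr (- s)) * indicator {1..} (- t) \<partial>lborel) = ?tail"
    using nn_integral_real_affine[where c = "-1" and t = 0
        and f = "\<lambda>t. ennreal ((- t) powr (- s)) * indicator {1..} (- t)"]
    by simp
  finally have "bracket_integral s \<le> 2 + (?tail + ?tail)"
    by simp
  also have "\<dots> < \<infinity>"
    using nn_integral_powr_tail_less_top[OF assms] by (simp add: less_top ennreal_add_eq_top)
  finally show ?thesis .
qed

lemma bracket_integral_pos:
  assumes "s \<ge> 0"
  shows "bracket_integral s > 0"
proof -
  have "0 < ennreal (2 powr (- s / 2))"
    by simp
  also have "\<dots> = (\<integral>\<^sup>+t. ennreal (2 powr (- s / 2)) * indicator {0..1::real} t \<partial>lborel)"
    by (simp add: nn_integral_cmult_indicator)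
  also have "\<dots> \<le> bracket_integral s"
    unfolding bracket_integral_def
  proof (intro nn_integral_mono)
    fix t :: real
    have "t \<in> {0..1} \<Longrightarrow> 2 powr (- s / 2) \<le> (1 + t\<^sup>2) powr (- s / 2)"
      using assms by (intro powr_mono2') (auto simp: power_le_one add_pos_nonneg)
    then show "ennreal (2 powr (- s / 2)) * indicator {0..1} t \<le> ennreal ((1 + t\<^sup>2) powr (- s / 2))"
      by (auto simp: indicator_def ennreal_leI)
  qed
  finally show ?thesis .
qed

section \<open>Integrability\<close>

definition quad :: "real \<Rightarrow> real \<Rightarrow> real \<Rightarrow> real \<Rightarrow> real" where
  "quad \<eta> \<omega> a b = 1 + exp (- 2 * a) * b\<^sup>2 + (\<eta> + \<omega> * exp (- a))\<^sup>2"

lemma quad_ge_one: "quad \<eta> \<omega> a b \<ge> 1"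
  by (simp add: quad_def)

lemma quad_pos: "quad \<eta> \<omega> a b > 0"
  using quad_ge_one[of \<eta> \<omega> a b] by linarith

lemma quad_eq_quad_zero: "quad \<eta> \<omega> a b = quad \<eta> \<omega> a 0 + exp (- 2 * a) * b\<^sup>2"
  by (simp add: quad_def)

lemma gfun_eq_quad: "gfun \<eta> \<omega> s c a b = exp (- (1 + c) * a) * quad \<eta> \<omega> a b powr (- s / 2)"
  by (simp add: gfun_def quad_def)

lemma gfun_nonneg: "gfun \<eta> \<omega> s c a b \<ge> 0"
  by (simp add: gfun_def)

lemma gfun_antimono_s: "s \<le> s' \<Longrightarrow> gfun \<eta> \<omega> s' c a b \<le> gfun \<eta> \<omega> s c a b"
  unfolding gfun_eq_quad by (intro mult_left_mono powr_mono quad_ge_one) auto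

text \<open>The lower bound for \<open>a \<rightarrow> -\<infinity>\<close> is where \<open>\<omega> \<noteq> 0\<close> enters.\<close>
lemma quad_zero_comparable:
  assumes "\<omega> \<noteq> 0"
  obtains k K :: real where "k > 0" "K > 0"
    "\<And>a. k * exp (- 2 * min a 0) \<le> quad \<eta> \<omega> a 0"
    "\<And>a. quad \<eta> \<omega> a 0 \<le> K * exp (- 2 * min a 0)"
proof
  define k where "k = min 1 (\<omega>\<^sup>2 / (2 * (1 + \<eta>\<^sup>2)))"
  define K where "K = 1 + 2 * \<eta>\<^sup>2 + 2 * \<omega>\<^sup>2"
  show "k > 0" "K > 0"
    using assms by (simp_all add: k_def K_def add_pos_nonneg)
  fix a :: real
  define x where "x = exp (- a)"
  define w where "w = \<eta> + \<omega> * x"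
  have quad0: "quad \<eta> \<omega> a 0 = 1 + w\<^sup>2"
    by (simp add: quad_def w_def x_def)
  have m: "exp (- 2 * min a 0) = max 1 (x\<^sup>2)"
    by (auto simp: x_def min_def max_def power2_eq_square simp flip: exp_add)
  have "\<omega>\<^sup>2 * x\<^sup>2 = (w - \<eta>)\<^sup>2"
    by (simp add: w_def power_mult_distrib)
  also have "\<dots> \<le> (w - \<eta>)\<^sup>2 + (w + \<eta>)\<^sup>2"
    by simp
  also have "\<dots> = 2 * w\<^sup>2 + 2 * \<eta>\<^sup>2"
    by (simp add: power2_eq_square algebra_simps)
  also have "\<dots> \<le> 2 * (1 + \<eta>\<^sup>2) * (1 + w\<^sup>2)"
    by (simp add: algebra_simps)
  finally have "\<omega>\<^sup>2 / (2 * (1 + \<eta>\<^sup>2)) * x\<^sup>2 \<le> 1 + w\<^sup>2"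
    by (simp add: field_simps add_pos_nonneg)
  moreover have "k * x\<^sup>2 \<le> \<omega>\<^sup>2 / (2 * (1 + \<eta>\<^sup>2)) * x\<^sup>2"
    by (intro mult_right_mono) (simp_all add: k_def)
  moreover have "k \<le> 1 + w\<^sup>2"
    using min.cobounded1[of 1] zero_le_power2[of w] unfolding k_def by linarith
  ultimately show "k * exp (- 2 * min a 0) \<le> quad \<eta> \<omega> a 0"
    unfolding quad0 m by (cases "x\<^sup>2 \<le> 1") (simp_all add: max_def)
  have "w\<^sup>2 \<le> (\<eta> + \<omega> * x)\<^sup>2 + (\<eta> - \<omega> * x)\<^sup>2"
    by (simp add: w_def)
  also have "\<dots> = 2 * \<eta>\<^sup>2 + 2 * \<omega>\<^sup>2 * x\<^sup>2"
    by (simp add: power2_eq_square algebra_simps)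
  finally have "1 + w\<^sup>2 \<le> 1 + 2 * \<eta>\<^sup>2 + 2 * \<omega>\<^sup>2 * x\<^sup>2"
    by simp
  moreover have "1 + 2 * \<eta>\<^sup>2 + 2 * \<omega>\<^sup>2 * x\<^sup>2 \<le> K * max 1 (x\<^sup>2)"
  proof (cases "x\<^sup>2 \<le> 1")
    case True
    then have "\<omega>\<^sup>2 * x\<^sup>2 \<le> \<omega>\<^sup>2"
      using mult_left_mono[of "x\<^sup>2" 1 "\<omega>\<^sup>2"] by simp
    then show ?thesis
      using True by (simp add: K_def max_def)
  next
    case False
    then have "1 + 2 * \<eta>\<^sup>2 \<le> (1 + 2 * \<eta>\<^sup>2) * x\<^sup>2"
      using mult_left_mono[of 1 "x\<^sup>2" "1 + 2 * \<eta>\<^sup>2"] by simp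
    then show ?thesis
      using False by (simp add: K_def max_def algebra_simps)
  qed
  ultimately show "quad \<eta> \<omega> a 0 \<le> K * exp (- 2 * min a 0)"
    unfolding quad0 m by linarith
qed

lemma nn_integral_gfun_vertical:
  "(\<integral>\<^sup>+b. ennreal (gfun \<eta> \<omega> s c a b) \<partial>lborel)
     = ennreal (exp (- c * a) * quad \<eta> \<omega> a 0 powr ((1 - s) / 2)) * bracket_integral s"
proof -
  define A where "A = quad \<eta> \<omega> a 0"
  have A: "A \<ge> 1"
    unfolding A_def by (rule quad_ge_one)
  \<comment> \<open>the substitution \<open>b = k * t\<close> turns \<open>quad \<eta> \<omega> a b\<close> into \<open>A * (1 + t\<^sup>2)\<close>\<close>
  define k where "k = exp a * sqrt A"
  have k: "k > 0"
    using A by (simp add: k_def)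
  have gfun_scaled: "gfun \<eta> \<omega> s c a (k * t)
      = exp (- (1 + c) * a) * A powr (- s / 2) * (1 + t\<^sup>2) powr (- s / 2)" for t
  proof -
    have "exp (- 2 * a) * (k * t)\<^sup>2 = A * t\<^sup>2"
      using A by (simp add: k_def power_mult_distrib exp_minus field_simps flip: exp_add exp_double)
    then have "quad \<eta> \<omega> a (k * t) = A * (1 + t\<^sup>2)"
      by (simp add: quad_eq_quad_zero[of _ _ _ "k * t"] A_def algebra_simps)
    then show ?thesis
      using A by (simp add: gfun_eq_quad powr_mult)
  qed
  have "(\<integral>\<^sup>+b. ennreal (gfun \<eta> \<omega> s c a b) \<partial>lborel)
      = ennreal k * (\<integral>\<^sup>+t. ennreal (gfun \<eta> \<omega> s c a (k * t)) \<partial>lborel)"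
    using nn_integral_real_affine[where c = k and t = 0 and f = "\<lambda>b. ennreal (gfun \<eta> \<omega> s c a b)"] k
    by (simp add: gfun_def)
  also have "\<dots> = ennreal (k * (exp (- (1 + c) * a) * A powr (- s / 2))) * bracket_integral s"
    using k unfolding gfun_scaled bracket_integral_def
    by (simp add: nn_integral_cmult ennreal_mult mult.assoc)
  also have "k * (exp (- (1 + c) * a) * A powr (- s / 2)) = exp (- c * a) * A powr ((1 - s) / 2)"
  proof -
    have "k * (exp (- (1 + c) * a) * A powr (- s / 2))
        = (exp a * exp (- (1 + c) * a)) * (A powr (1 / 2) * A powr (- s / 2))"
      using A by (simp add: k_def powr_half_sqrt)
    also have "\<dots> = exp (- c * a) * A powr ((1 - s) / 2)"
      by (simp add: algebra_simps diff_divide_distrib flip: exp_add powr_add)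
    finally show ?thesis .
  qed
  finally show ?thesis
    by (simp add: A_def)
qed

lemma nn_integral_marginal_less_top_iff:
  assumes "\<omega> \<noteq> 0" "s \<ge> 1"
  shows "(\<integral>\<^sup>+a. ennreal (exp (- c * a) * quad \<eta> \<omega> a 0 powr ((1 - s) / 2)) \<partial>lborel) < \<infinity>
     \<longleftrightarrow> c > 0 \<and> s > 1 + c"
proof -
  define p where "p = (1 - s) / 2"
  have p: "p \<le> 0"
    using assms by (simp add: p_def)
  obtain k K where kK: "k > 0" "K > 0"
    and lower: "\<And>a. k * exp (- 2 * min a 0) \<le> quad \<eta> \<omega> a 0"
    and upper: "\<And>a. quad \<eta> \<omega> a 0 \<le> K * exp (- 2 * min a 0)"
    using quad_zero_comparable[OF assms(1)] by blast
  define h where "h a = exp (- c * a) * exp ((s - 1) * min a 0)" for a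
  have comparison_powr: "(C * exp (- 2 * min a 0)) powr p = C powr p * exp ((s - 1) * min a 0)"
    if "C > 0" for C a
  proof -
    have "exp (- 2 * min a 0) powr p = exp ((s - 1) * min a 0)"
      by (simp add: powr_def p_def field_simps)
    then show ?thesis
      using that by (simp add: powr_mult)
  qed
  have h_upper: "exp (- c * a) * quad \<eta> \<omega> a 0 powr p \<le> k powr p * h a" for a
  proof -
    have "quad \<eta> \<omega> a 0 powr p \<le> (k * exp (- 2 * min a 0)) powr p"
      using kK lower p by (intro powr_mono2') auto
    then show ?thesis
      using kK comparison_powr[of k a] by (simp add: h_def mult_left_mono mult.left_commute)
  qed
  have h_lower: "K powr p * h a \<le> exp (- c * a) * quad \<eta> \<omega> a 0 powr p" for a
  proof -
    have "(K * exp (- 2 * min a 0)) powr p \<le> quad \<eta> \<omega> a 0 powr p"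
      using kK upper p quad_pos by (intro powr_mono2') auto
    then show ?thesis
      using kK comparison_powr[of K a] by (simp add: h_def mult_left_mono mult.left_commute)
  qed
  have "(\<integral>\<^sup>+a. ennreal (exp (- c * a) * quad \<eta> \<omega> a 0 powr p) \<partial>lborel) < \<infinity>
      \<longleftrightarrow> (\<integral>\<^sup>+a. ennreal (h a) \<partial>lborel) < \<infinity>"
    by (rule nn_integral_less_top_iff_comparable[where k = "K powr p" and K = "k powr p"])
      (use kK h_lower h_upper in \<open>auto simp: h_def quad_def\<close>)
  also have "\<dots> \<longleftrightarrow> c > 0 \<and> s - 1 > c"
    unfolding h_def mult_exp_exp by (rule nn_integral_exp_two_sided_less_top_iff)
  finally show ?thesis
    by (auto simp: p_def)
qed

lemma gfun_borel_measurable [measurable]: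
  "(\<lambda>(a, b). gfun \<eta> \<omega> s c a b) \<in> borel_measurable (lborel \<Otimes>\<^sub>M lborel :: (real \<times> real) measure)"
  unfolding gfun_def by measurable

lemma nn_integral_gfun:
  "(\<integral>\<^sup>+x. ennreal (case x of (a, b) \<Rightarrow> gfun \<eta> \<omega> s c a b) \<partial>(lborel \<Otimes>\<^sub>M lborel))
     = (\<integral>\<^sup>+a. ennreal (exp (- c * a) * quad \<eta> \<omega> a 0 powr ((1 - s) / 2)) \<partial>lborel) * bracket_integral s"
proof -
  have "(\<integral>\<^sup>+x. ennreal (case x of (a, b) \<Rightarrow> gfun \<eta> \<omega> s c a b) \<partial>(lborel \<Otimes>\<^sub>M lborel))
      = (\<integral>\<^sup>+a. \<integral>\<^sup>+b. ennreal (gfun \<eta> \<omega> s c a b) \<partial>lborel \<partial>lborel)"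
    by (subst lborel.nn_integral_fst[symmetric]) auto
  also have "\<dots> = (\<integral>\<^sup>+a. ennreal (exp (- c * a) * quad \<eta> \<omega> a 0 powr ((1 - s) / 2)) \<partial>lborel) * bracket_integral s"
    unfolding nn_integral_gfun_vertical by (rule nn_integral_multc) (simp add: quad_def)
  finally show ?thesis .
qed

lemma integrable_gfun_iff_of_gt_one:
  assumes "\<omega> \<noteq> 0" "s > 1"
  shows "integrable lborel (\<lambda>(a, b). gfun \<eta> \<omega> s c a b) \<longleftrightarrow> c > 0 \<and> s > 1 + c"
proof -
  have "(\<integral>\<^sup>+x. ennreal (norm (case x of (a, b) \<Rightarrow> gfun \<eta> \<omega> s c a b)) \<partial>lborel)
      = (\<integral>\<^sup>+x. ennreal (case x of (a, b) \<Rightarrow> gfun \<eta> \<omega> s c a b) \<partial>(lborel \<Otimes>\<^sub>M lborel))"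
    by (simp add: lborel_prod gfun_nonneg case_prod_beta)
  then have "integrable lborel (\<lambda>(a, b). gfun \<eta> \<omega> s c a b)
      \<longleftrightarrow> (\<integral>\<^sup>+a. ennreal (exp (- c * a) * quad \<eta> \<omega> a 0 powr ((1 - s) / 2)) \<partial>lborel) * bracket_integral s < \<infinity>"
    using gfun_borel_measurable unfolding integrable_iff_bounded nn_integral_gfun
    by (simp add: lborel_prod)
  also have "\<dots> \<longleftrightarrow> (\<integral>\<^sup>+a. ennreal (exp (- c * a) * quad \<eta> \<omega> a 0 powr ((1 - s) / 2)) \<partial>lborel) < \<infinity>"
    using bracket_integral_less_top[of s] bracket_integral_pos[of s] assms
    by (auto simp: ennreal_mult_less_top top.not_eq_extremum)
  also have "\<dots> \<longleftrightarrow> c > 0 \<and> s > 1 + c"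
    using assms by (intro nn_integral_marginal_less_top_iff) auto
  finally show ?thesis .
qed

text \<open>For \<open>s \<le> 1\<close> compare with an exponent \<open>s' > 1\<close> that still violates the condition.\<close>
lemma integrable_gfun_iff:
  assumes "\<omega> \<noteq> 0"
  shows "integrable lborel (\<lambda>(a, b). gfun \<eta> \<omega> s c a b) \<longleftrightarrow> c > 0 \<and> s > 1 + c"
proof (cases "s > 1")
  case True
  then show ?thesis
    using integrable_gfun_iff_of_gt_one[OF assms] by blast
next
  case False
  define s' where "s' = (if c > 0 then 1 + c else 2)"
  have s': "s \<le> s'" "s' > 1" "\<not> (c > 0 \<and> s' > 1 + c)"
    using False by (auto simp: s'_def)
  have "\<not> integrable lborel (\<lambda>(a, b). gfun \<eta> \<omega> s c a b)"
  proof
    assume "integrable lborel (\<lambda>(a, b). gfun \<eta> \<omega> s c a b)"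
    then have "integrable lborel (\<lambda>(a, b). gfun \<eta> \<omega> s' c a b)"
      by (rule Bochner_Integration.integrable_bound)
        (use gfun_borel_measurable in \<open>auto simp: lborel_prod gfun_nonneg gfun_antimono_s[OF s'(1)] split: prod.splits\<close>)
    then show False
      using integrable_gfun_iff_of_gt_one[OF assms s'(2)] s'(3) by blast
  qed
  then show ?thesis
    using False by auto
qed

section \<open>Logarithmic derivatives\<close>

definition quad_da :: "real \<Rightarrow> real \<Rightarrow> real \<Rightarrow> real \<Rightarrow> real" where
  "quad_da \<eta> \<omega> a b = - 2 * exp (- 2 * a) * b\<^sup>2 - 2 * (\<eta> + \<omega> * exp (- a)) * \<omega> * exp (- a)"

definition log_deriv_a :: "real \<Rightarrow> real \<Rightarrow> real \<Rightarrow> real \<Rightarrow> real \<Rightarrow> real \<Rightarrow> real" where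
  "log_deriv_a \<eta> \<omega> s c a b = - (1 + c) - s / 2 * (quad_da \<eta> \<omega> a b / quad \<eta> \<omega> a b)"

definition log_deriv_b :: "real \<Rightarrow> real \<Rightarrow> real \<Rightarrow> real \<Rightarrow> real \<Rightarrow> real" where
  "log_deriv_b \<eta> \<omega> s a b = - s * exp (- 2 * a) * b / quad \<eta> \<omega> a b"

lemma abs_exp_b_le_quad:
  assumes "\<omega> \<noteq> 0"
  shows "\<bar>exp (- 2 * a) * b\<bar> \<le> (1 + \<bar>\<eta>\<bar>) / \<bar>\<omega>\<bar> * quad \<eta> \<omega> a b"
proof -
  define x where "x = exp (- a)"
  define u where "u = x * b"
  define w where "w = \<eta> + \<omega> * x"
  have x: "x > 0"
    by (simp add: x_def)
  have Q: "quad \<eta> \<omega> a b = 1 + u\<^sup>2 + w\<^sup>2"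
    by (simp add: quad_def u_def w_def x_def power_mult_distrib flip: exp_double exp_add)
  have lhs: "\<bar>exp (- 2 * a) * b\<bar> = x * \<bar>u\<bar>"
    using x by (simp add: x_def u_def abs_mult flip: exp_add)
  have "2 * (\<bar>w\<bar> * \<bar>u\<bar>) \<le> w\<^sup>2 + u\<^sup>2"
    using sum_squares_bound[of "\<bar>w\<bar>" "\<bar>u\<bar>"] by (simp add: mult.assoc)
  then have wu: "\<bar>w\<bar> * \<bar>u\<bar> \<le> 1 + u\<^sup>2 + w\<^sup>2"
    using mult_nonneg_nonneg[OF abs_ge_zero[of w] abs_ge_zero[of u]] by linarith
  have "2 * \<bar>u\<bar> \<le> 1 + u\<^sup>2"
    using sum_squares_bound[of 1 "\<bar>u\<bar>"] by simp
  then have u: "\<bar>u\<bar> \<le> 1 + u\<^sup>2 + w\<^sup>2"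
    using zero_le_power2[of w] abs_ge_zero[of u] by linarith
  have "\<bar>\<omega>\<bar> * x = \<bar>w - \<eta>\<bar>"
    using x by (simp add: w_def abs_mult)
  then have "\<bar>\<omega>\<bar> * x \<le> \<bar>w\<bar> + \<bar>\<eta>\<bar>"
    by linarith
  then have "\<bar>\<omega>\<bar> * (x * \<bar>u\<bar>) \<le> (\<bar>w\<bar> + \<bar>\<eta>\<bar>) * \<bar>u\<bar>"
    by (simp add: mult.assoc[symmetric] mult_right_mono)
  also have "\<dots> = \<bar>w\<bar> * \<bar>u\<bar> + \<bar>\<eta>\<bar> * \<bar>u\<bar>"
    by (simp add: algebra_simps)
  also have "\<dots> \<le> (1 + \<bar>\<eta>\<bar>) * (1 + u\<^sup>2 + w\<^sup>2)"
    using wu mult_left_mono[OF u, of "\<bar>\<eta>\<bar>"] by (simp add: algebra_simps)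
  finally have "\<bar>\<omega>\<bar> * (x * \<bar>u\<bar>) \<le> (1 + \<bar>\<eta>\<bar>) * (1 + u\<^sup>2 + w\<^sup>2)" .
  then show ?thesis
    using assms unfolding Q lhs by (simp add: field_simps)
qed

lemma abs_quad_da_le_quad: "\<bar>quad_da \<eta> \<omega> a b\<bar> \<le> (2 + 2 * \<bar>\<eta>\<bar>) * quad \<eta> \<omega> a b"
proof -
  define x where "x = exp (- a)"
  define u where "u = x * b"
  define w where "w = \<eta> + \<omega> * x"
  have Q: "quad \<eta> \<omega> a b = 1 + u\<^sup>2 + w\<^sup>2"
    by (simp add: quad_def u_def w_def x_def power_mult_distrib flip: exp_double exp_add)
  have da: "quad_da \<eta> \<omega> a b = - 2 * u\<^sup>2 - 2 * w * (\<omega> * x)"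
    by (simp add: quad_da_def u_def w_def x_def power_mult_distrib flip: exp_double exp_add)
  have "2 * \<bar>w\<bar> \<le> 1 + w\<^sup>2"
    using sum_squares_bound[of 1 "\<bar>w\<bar>"] by simp
  then have w: "\<bar>w\<bar> \<le> 1 + u\<^sup>2 + w\<^sup>2"
    using zero_le_power2[of u] abs_ge_zero[of w] by linarith
  have "\<bar>\<omega> * x\<bar> \<le> \<bar>w\<bar> + \<bar>\<eta>\<bar>"
    using abs_triangle_ineq4[of w \<eta>] by (simp add: w_def)
  then have wx: "\<bar>w\<bar> * \<bar>\<omega> * x\<bar> \<le> \<bar>w\<bar> * (\<bar>w\<bar> + \<bar>\<eta>\<bar>)"
    by (rule mult_left_mono) simp
  have "\<bar>quad_da \<eta> \<omega> a b\<bar> \<le> \<bar>- 2 * u\<^sup>2\<bar> + \<bar>2 * w * (\<omega> * x)\<bar>"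
    unfolding da by (rule abs_triangle_ineq4)
  also have "\<dots> = 2 * u\<^sup>2 + 2 * (\<bar>w\<bar> * \<bar>\<omega> * x\<bar>)"
    by (simp add: abs_mult)
  also have "\<dots> \<le> 2 * u\<^sup>2 + 2 * (\<bar>w\<bar> * (\<bar>w\<bar> + \<bar>\<eta>\<bar>))"
    using wx by simp
  also have "\<dots> = 2 * (u\<^sup>2 + w\<^sup>2) + 2 * \<bar>\<eta>\<bar> * \<bar>w\<bar>"
    by (simp add: algebra_simps power2_eq_square abs_mult_self_eq)
  also have "\<dots> \<le> (2 + 2 * \<bar>\<eta>\<bar>) * (1 + u\<^sup>2 + w\<^sup>2)"
    using mult_left_mono[OF w, of "2 * \<bar>\<eta>\<bar>"] by (simp add: algebra_simps)
  finally show ?thesis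
    unfolding Q .
qed

lemma has_real_derivative_quad_a:
  "((\<lambda>x. quad \<eta> \<omega> x b) has_real_derivative quad_da \<eta> \<omega> a b) (at a)"
  unfolding quad_def quad_da_def
  by (auto intro!: derivative_eq_intros simp: algebra_simps power2_eq_square)

lemma has_real_derivative_quad_b:
  "((\<lambda>y. quad \<eta> \<omega> a y) has_real_derivative 2 * exp (- 2 * a) * b) (at b)"
  unfolding quad_def
  by (auto intro!: derivative_eq_intros simp: algebra_simps power2_eq_square)

lemma has_real_derivative_gfun_a:
  "((\<lambda>x. gfun \<eta> \<omega> s c x b) has_real_derivative gfun \<eta> \<omega> s c a b * log_deriv_a \<eta> \<omega> s c a b) (at a)"
  unfolding gfun_eq_quad
  by (rule derivative_eq_intros refl has_real_derivative_quad_a quad_pos | simp)+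
    (simp add: log_deriv_a_def powr_diff order_less_imp_le[OF quad_pos] algebra_simps)

lemma has_real_derivative_gfun_b:
  "((\<lambda>y. gfun \<eta> \<omega> s c a y) has_real_derivative gfun \<eta> \<omega> s c a b * log_deriv_b \<eta> \<omega> s a b) (at b)"
  unfolding gfun_eq_quad
  by (rule derivative_eq_intros refl has_real_derivative_quad_b quad_pos | simp)+
    (simp add: log_deriv_b_def powr_diff order_less_imp_le[OF quad_pos] algebra_simps)

lemma has_real_derivative_log_deriv_b_a:
  "((\<lambda>x. log_deriv_b \<eta> \<omega> s x b) has_real_derivative
      log_deriv_b \<eta> \<omega> s a b * (- 2 - quad_da \<eta> \<omega> a b / quad \<eta> \<omega> a b)) (at a)"
  unfolding log_deriv_b_def
  by (rule derivative_eq_intros refl has_real_derivative_quad_a | simp add: quad_pos[THEN less_imp_neq, symmetric])+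
    (simp add: field_simps quad_pos[THEN less_imp_neq, symmetric] power2_eq_square)

lemma deriv_deriv_gfun:
  "deriv (\<lambda>x. deriv (\<lambda>y. gfun \<eta> \<omega> s c x y) b) a
     = gfun \<eta> \<omega> s c a b * (log_deriv_b \<eta> \<omega> s a b
         * (log_deriv_a \<eta> \<omega> s c a b - 2 - quad_da \<eta> \<omega> a b / quad \<eta> \<omega> a b))"
proof -
  have inner: "(\<lambda>x. deriv (\<lambda>y. gfun \<eta> \<omega> s c x y) b) = (\<lambda>x. gfun \<eta> \<omega> s c x b * log_deriv_b \<eta> \<omega> s x b)"
    by (rule ext) (rule DERIV_imp_deriv[OF has_real_derivative_gfun_b])
  show ?thesis
    unfolding inner DERIV_imp_deriv[OF DERIV_mult'[OF has_real_derivative_gfun_a has_real_derivative_log_deriv_b_a]]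
    by (simp add: algebra_simps)
qed

lemma abs_quad_da_div_quad_le: "\<bar>quad_da \<eta> \<omega> a b / quad \<eta> \<omega> a b\<bar> \<le> 2 + 2 * \<bar>\<eta>\<bar>"
  using abs_quad_da_le_quad[of \<eta> \<omega> a b] quad_pos[of \<eta> \<omega> a b]
  by (simp add: abs_divide divide_le_eq)

lemma abs_log_deriv_a_le: "\<bar>log_deriv_a \<eta> \<omega> s c a b\<bar> \<le> \<bar>1 + c\<bar> + \<bar>s\<bar> * (1 + \<bar>\<eta>\<bar>)"
proof -
  have "\<bar>log_deriv_a \<eta> \<omega> s c a b\<bar>
      \<le> \<bar>1 + c\<bar> + \<bar>s\<bar> / 2 * \<bar>quad_da \<eta> \<omega> a b / quad \<eta> \<omega> a b\<bar>"
    using abs_triangle_ineq4[of "- (1 + c)" "s / 2 * (quad_da \<eta> \<omega> a b / quad \<eta> \<omega> a b)"]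
    unfolding log_deriv_a_def abs_minus_cancel abs_mult by simp
  also have "\<dots> \<le> \<bar>1 + c\<bar> + \<bar>s\<bar> / 2 * (2 + 2 * \<bar>\<eta>\<bar>)"
    by (intro add_left_mono mult_left_mono abs_quad_da_div_quad_le) simp
  finally show ?thesis
    by (simp add: algebra_simps)
qed

lemma abs_log_deriv_b_le:
  assumes "\<omega> \<noteq> 0"
  shows "\<bar>log_deriv_b \<eta> \<omega> s a b\<bar> \<le> \<bar>s\<bar> * (1 + \<bar>\<eta>\<bar>) / \<bar>\<omega>\<bar>"
proof -
  have "\<bar>log_deriv_b \<eta> \<omega> s a b\<bar> = \<bar>s\<bar> * (\<bar>exp (- 2 * a) * b\<bar> / quad \<eta> \<omega> a b)"
    using quad_pos[of \<eta> \<omega> a b] by (simp add: log_deriv_b_def abs_mult abs_divide)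
  also have "\<dots> \<le> \<bar>s\<bar> * ((1 + \<bar>\<eta>\<bar>) / \<bar>\<omega>\<bar>)"
    using abs_exp_b_le_quad[OF assms, of a b \<eta>] quad_pos[of \<eta> \<omega> a b]
    by (intro mult_left_mono) (simp_all add: divide_le_eq)
  finally show ?thesis
    by simp
qed

lemma gfun_derivatives_bounded:
  assumes "\<omega> \<noteq> 0"
  shows "\<exists>M > 0. \<forall>a b.
            \<bar>deriv (\<lambda>x. gfun \<eta> \<omega> s c x b) a\<bar> \<le> M * gfun \<eta> \<omega> s c a b
          \<and> \<bar>deriv (\<lambda>y. gfun \<eta> \<omega> s c a y) b\<bar> \<le> M * gfun \<eta> \<omega> s c a b
          \<and> \<bar>deriv (\<lambda>x. deriv (\<lambda>y. gfun \<eta> \<omega> s c x y) b) a\<bar> \<le> M * gfun \<eta> \<omega> s c a b"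
proof -
  define Ca where "Ca = \<bar>1 + c\<bar> + \<bar>s\<bar> * (1 + \<bar>\<eta>\<bar>)"
  define Cb where "Cb = \<bar>s\<bar> * (1 + \<bar>\<eta>\<bar>) / \<bar>\<omega>\<bar>"
  define M where "M = 1 + Ca + Cb + Cb * (Ca + 4 + 2 * \<bar>\<eta>\<bar>)"
  have Ca: "Ca \<ge> 0" and Cb: "Cb \<ge> 0"
    by (simp_all add: Ca_def Cb_def)
  have M: "M > 0" "Ca \<le> M" "Cb \<le> M" "Cb * (Ca + 4 + 2 * \<bar>\<eta>\<bar>) \<le> M"
    using Ca Cb by (simp_all add: M_def add_pos_nonneg)
  have scale: "\<bar>g * L\<bar> \<le> M * g" if "g \<ge> 0" "\<bar>L\<bar> \<le> M" for g L
    using that mult_left_mono[OF that(2) that(1)] by (simp add: abs_mult mult.commute)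
  have "\<bar>deriv (\<lambda>x. gfun \<eta> \<omega> s c x b) a\<bar> \<le> M * gfun \<eta> \<omega> s c a b
      \<and> \<bar>deriv (\<lambda>y. gfun \<eta> \<omega> s c a y) b\<bar> \<le> M * gfun \<eta> \<omega> s c a b
      \<and> \<bar>deriv (\<lambda>x. deriv (\<lambda>y. gfun \<eta> \<omega> s c x y) b) a\<bar> \<le> M * gfun \<eta> \<omega> s c a b" for a b
  proof (intro conjI)
    have la: "\<bar>log_deriv_a \<eta> \<omega> s c a b\<bar> \<le> Ca"
      unfolding Ca_def by (rule abs_log_deriv_a_le)
    have lb: "\<bar>log_deriv_b \<eta> \<omega> s a b\<bar> \<le> Cb"
      unfolding Cb_def by (rule abs_log_deriv_b_le[OF assms])
    have "\<bar>log_deriv_a \<eta> \<omega> s c a b - 2 - quad_da \<eta> \<omega> a b / quad \<eta> \<omega> a b\<bar> \<le> Ca + 4 + 2 * \<bar>\<eta>\<bar>"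
      using la abs_quad_da_div_quad_le[of \<eta> \<omega> a b] by linarith
    then have "\<bar>log_deriv_b \<eta> \<omega> s a b * (log_deriv_a \<eta> \<omega> s c a b - 2 - quad_da \<eta> \<omega> a b / quad \<eta> \<omega> a b)\<bar>
        \<le> Cb * (Ca + 4 + 2 * \<bar>\<eta>\<bar>)"
      unfolding abs_mult using lb by (intro mult_mono) auto
    then show "\<bar>deriv (\<lambda>x. deriv (\<lambda>y. gfun \<eta> \<omega> s c x y) b) a\<bar> \<le> M * gfun \<eta> \<omega> s c a b"
      unfolding deriv_deriv_gfun using M by (intro scale gfun_nonneg) auto
    show "\<bar>deriv (\<lambda>x. gfun \<eta> \<omega> s c x b) a\<bar> \<le> M * gfun \<eta> \<omega> s c a b"
      unfolding DERIV_imp_deriv[OF has_real_derivative_gfun_a] using la M by (intro scale gfun_nonneg) auto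
    show "\<bar>deriv (\<lambda>y. gfun \<eta> \<omega> s c a y) b\<bar> \<le> M * gfun \<eta> \<omega> s c a b"
      unfolding DERIV_imp_deriv[OF has_real_derivative_gfun_b] using lb M by (intro scale gfun_nonneg) auto
  qed
  then show ?thesis
    using M(1) by blast
qed

theorem mainTheorem7:
  fixes \<eta> \<omega> s c :: real
  assumes "\<omega> \<noteq> 0"
  shows "(integrable (lborel :: (real \<times> real) measure) (\<lambda>(a, b). gfun \<eta> \<omega> s c a b)
            \<longleftrightarrow> c > 0 \<and> s > 1 + c)
       \<and> (\<exists>M > 0. \<forall>a b.
            \<bar>deriv (\<lambda>x. gfun \<eta> \<omega> s c x b) a\<bar> \<le> M * gfun \<eta> \<omega> s c a b
          \<and> \<bar>deriv (\<lambda>y. gfun \<eta> \<omega> s c a y) b\<bar> \<le> M * gfun \<eta> \<omega> s c a b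
          \<and> \<bar>deriv (\<lambda>x. deriv (\<lambda>y. gfun \<eta> \<omega> s c x y) b) a\<bar> \<le> M * gfun \<eta> \<omega> s c a b)"
  using integrable_gfun_iff[OF assms] gfun_derivatives_bounded[OF assms] by blast

end
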